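(* Let $h>1$, $q=2^h$, and let $U$ be a nonempty proper subset of $\mathrm{GF}(q)^{\star}$. Let $\Omega$ be a regular hyperoval of $PG(2,q^2)$. Then there are at least two affine points $P(x,y)\in\Omega$ with $\|x\|\in U$.
   Context: $\|x\|=x^{q+1}$ for $x\in\mathrm{GF}(q^2)$. Points of $PG(2,q^2)$ are written in affine coordinates $P(x,y)$ when not on the line at infinity. For $q$ even, a regular hyperoval of $PG(2,q^2)$ is the union of a non-degenerate conic and its nucleus (the common point of all its tangent lines). *)

theory Defs
  imports Main
begin

text \<open>Points of PG(2,F) are given by homogeneous coordinates: nonzero triples
  (x,y,z) in F^3, two triples representing the same point iff proportional.
  A set of projective points is represented by the set of all its nonzero
  coordinate triples (a cone closed under nonzero scaling).
  The affine point P(x,y) has coordinates (x,y,1); the line at infinity is z = 0.\<close>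

type_synonym 'a coef6 = "'a \<times> 'a \<times> 'a \<times> 'a \<times> 'a \<times> 'a"

definition scale3 :: "'a::field \<Rightarrow> 'a \<times> 'a \<times> 'a \<Rightarrow> 'a \<times> 'a \<times> 'a" where
  "scale3 t v = (case v of (x, y, z) \<Rightarrow> (t * x, t * y, t * z))"

definition proj_pt :: "('a::field \<times> 'a \<times> 'a) \<Rightarrow> ('a \<times> 'a \<times> 'a) set" where
  "proj_pt v = {w. \<exists>t. t \<noteq> 0 \<and> w = scale3 t v}"

definition qform :: "'a::field coef6 \<Rightarrow> 'a \<times> 'a \<times> 'a \<Rightarrow> 'a" where
  "qform C v = (case C of (a, b, c, f, g, h) \<Rightarrow> case v of (x, y, z) \<Rightarrow>
      a*x^2 + b*y^2 + c*z^2 + f*y*z + g*z*x + h*x*y)"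

definition qgrad :: "'a::field coef6 \<Rightarrow> 'a \<times> 'a \<times> 'a \<Rightarrow> 'a \<times> 'a \<times> 'a" where
  "qgrad C v = (case C of (a, b, c, f, g, h) \<Rightarrow> case v of (x, y, z) \<Rightarrow>
      (2*a*x + h*y + g*z, h*x + 2*b*y + f*z, g*x + f*y + 2*c*z))"

definition conic :: "'a::field coef6 \<Rightarrow> ('a \<times> 'a \<times> 'a) set" where
  "conic C = {v. v \<noteq> (0,0,0) \<and> qform C v = 0}"

definition nondegenerate_conic :: "'a::field coef6 \<Rightarrow> bool" where
  "nondegenerate_conic C \<longleftrightarrow> C \<noteq> (0,0,0,0,0,0) \<and>
     \<not> (\<exists>v. v \<noteq> (0,0,0) \<and> qform C v = 0 \<and> qgrad C v = (0,0,0))"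

definition pline :: "'a::field \<times> 'a \<times> 'a \<Rightarrow> ('a \<times> 'a \<times> 'a) set" where
  "pline L = (case L of (l, m, n) \<Rightarrow>
      {v. v \<noteq> (0,0,0) \<and> (case v of (x, y, z) \<Rightarrow> l*x + m*y + n*z = 0)})"

definition tangent_line :: "'a::field coef6 \<Rightarrow> 'a \<times> 'a \<times> 'a \<Rightarrow> bool" where
  "tangent_line C L \<longleftrightarrow> L \<noteq> (0,0,0) \<and>
     (\<exists>P. P \<noteq> (0,0,0) \<and> pline L \<inter> conic C = proj_pt P)"

definition is_nucleus :: "'a::field coef6 \<Rightarrow> 'a \<times> 'a \<times> 'a \<Rightarrow> bool" where
  "is_nucleus C N \<longleftrightarrow> N \<noteq> (0,0,0) \<and> (\<forall>L. tangent_line C L \<longrightarrow> N \<in> pline L)"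

definition regular_hyperoval :: "('a::field \<times> 'a \<times> 'a) set \<Rightarrow> bool" where
  "regular_hyperoval \<Omega> \<longleftrightarrow> (\<exists>C N. nondegenerate_conic C \<and> is_nucleus C N \<and>
      \<Omega> = conic C \<union> proj_pt N)"

end

theory Submission
  imports Defs "HOL-Computational_Algebra.Polynomial"
begin

(* A regular
   hyperoval is a non-degenerate conic Q(x,y,z) = a x^2 + b y^2 + c z^2 + f yz + g zx + k xy = 0
   together with its nucleus (f : g : k).  For u in GF(q)* we find two affine points P(x,y) of
   the hyperoval with ||x|| = u; any element of U can serve as u.

   Over a fixed x the conic equation b y^2 + (f + k x) y + A(x) = 0 is linear if b = 0, and
   otherwise has two roots when tr(b A(x)/(f + k x)^2) = 0 (Artin-Schreier).
   The main lemma hyperoval_norm_points distinguishes the cases b = 0; k = f = 0; k = 0 ~= f;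
   k ~= 0 with ||f/k|| = u (nucleus plus a conic point); k ~= 0 with ||f/k|| ~= u (Moebius). *)

lemma card_roots_power_eq_le:
  fixes c :: "'a::field"
  assumes "0 < b"
  shows "card {x::'a. x^b = c} \<le> b"
proof -
  let ?p = "monom (1::'a) b - [:c:]"
  have "coeff ?p b = 1" using assms by (cases b) auto
  hence p0: "?p \<noteq> 0" by (metis coeff_0 zero_neq_one)
  have deg: "degree ?p \<le> b"
    by (rule degree_diff_le) (auto simp: degree_monom_le)
  have "{x::'a. x^b = c} = {x. poly ?p x = 0}" by (simp add: poly_monom)
  also have "card \<dots> \<le> degree ?p" by (rule card_poly_roots_bound[OF p0])
  finally show ?thesis using deg by simp
qed

lemma card_by_fibres:
  assumes "finite A" and "\<And>y. y \<in> f ` A \<Longrightarrow> card {x\<in>A. f x = y} = k"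
  shows "card A = card (f ` A) * k"
proof -
  have "A = (\<Union>y\<in>f ` A. {x\<in>A. f x = y})" by auto
  hence "card A = card (\<Union>y\<in>f ` A. {x\<in>A. f x = y})" by simp
  also have "\<dots> = (\<Sum>y\<in>f ` A. card {x\<in>A. f x = y})"
    by (rule card_UN_disjoint) (use assms(1) in auto)
  also have "\<dots> = (\<Sum>y\<in>f ` A. k)" using assms(2) by simp
  finally show ?thesis by simp
qed

lemma two_le_card:
  assumes "finite S" "p1 \<in> S" "p2 \<in> S" "p1 \<noteq> p2"
  shows "2 \<le> card S"
proof -
  have "card {p1, p2} = 2" using assms(4) by simp
  moreover have "card {p1, p2} \<le> card S" using assms(1-3) by (intro card_mono) auto
  ultimately show ?thesis by simp
qed

text \<open>For \<open>1 \<le> j < 2m\<close>, \<open>2^m + 1\<close> does not divide \<open>2^j + 2^m\<close>; this makes the power sums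
  over a norm circle vanish in the trace computation of \<open>trace_takes_value_on_circle\<close>.\<close>
lemma not_dvd_two_pow_plus:
  fixes m j :: nat
  assumes "1 \<le> j" "j < 2*m"
  shows "\<not> (2^m + 1) dvd (2^j + (2::nat)^m)"
proof
  assume d: "(2^m + 1) dvd (2^j + (2::nat)^m)"
  show False
  proof (cases "j \<le> m")
    case True
    have le: "(2::nat)^j \<le> 2^m" using True by (intro power_increasing) auto
    have "(2::nat)^1 \<le> 2^j" by (rule power_increasing) (use assms in auto)
    hence j1: "(2::nat)^j \<ge> 2" by simp
    have "2^j + (2::nat)^m = (2^m + 1) + (2^j - 1)" using j1 by simp
    with d have "(2^m + 1) dvd ((2^m + 1) + (2^j - (1::nat)))" by simp
    hence "(2^m + 1) dvd (2^j - (1::nat))" by (rule dvd_add_right_iff[THEN iffD1, OF dvd_refl])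
    moreover have "0 < (2::nat)^j - 1" using j1 by simp
    ultimately have "2^m + 1 \<le> (2::nat)^j - 1" by (rule dvd_imp_le)
    with le show False by arith
  next
    case False
    define l where "l = j - m"
    have l: "l < m" "j = m + l" using False assms unfolding l_def by auto
    have "(2^m + 1) * (2^l + 1) = (2^j + (2::nat)^m) + (2^l + 1)"
      using l(2) by (simp add: algebra_simps power_add)
    hence "(2^m + 1) dvd ((2^j + (2::nat)^m) + (2^l + 1))" by (metis dvd_triv_left)
    hence "(2^m + 1) dvd ((2::nat)^l + 1)" by (rule dvd_add_right_iff[THEN iffD1, OF d])
    hence "2^m + 1 \<le> (2::nat)^l + 1" by (rule dvd_imp_le) simp
    moreover have "(2::nat)^l < 2^m" using l(1) by (intro power_strict_increasing) auto
    ultimately show False by simp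
  qed
qed

locale gf2e =
  fixes e :: nat and field_type :: "'a::{field,finite} itself"
  assumes card_field: "card (UNIV::'a set) = 2^e" and e_pos: "0 < e"
begin

text \<open>The characteristic is 2: otherwise \<open>x \<mapsto> -x\<close> would pair off the \<open>2^e - 1\<close>
  nonzero elements, an odd number.\<close>
lemma one_plus_one: "(1::'a) + 1 = 0"
proof (rule ccontr)
  assume ne: "(1::'a) + 1 \<noteq> 0"
  have neg: "(x::'a) \<noteq> - x" if "x \<noteq> 0" for x
  proof
    assume "x = - x"
    hence "x + x = 0" by (metis add.right_inverse)
    hence "(1+1) * x = 0" by (simp add: distrib_right)
    thus False using ne that by simp
  qed
  let ?A = "UNIV - {0::'a}"
  have pairs: "card ?A = card ((\<lambda>x. {x, -x}) ` ?A) * 2"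
  proof (rule card_by_fibres)
    fix y assume "y \<in> (\<lambda>x. {x, -x}) ` ?A"
    then obtain x where x: "x \<noteq> 0" "y = {x, -x}" by auto
    have "{z \<in> ?A. {z, -z} = y} = {x, -x}"
      using x by (auto simp: doubleton_eq_iff)
    thus "card {z \<in> ?A. {z, -z} = y} = 2" using neg[OF x(1)] by simp
  qed simp
  have "card ?A = 2^e - 1" using card_field by (simp add: card_Diff_singleton)
  moreover have "odd ((2::nat)^e - 1)" using e_pos by (simp add: odd_pos)
  moreover have "even (card ?A)" using pairs by simp
  ultimately show False by simp
qed

lemma add_self [simp]: "(x::'a) + x = 0"
  using one_plus_one by (metis distrib_left mult_1_right mult_zero_right)

lemma two_eq_zero [simp]: "(2::'a) = 0"
  using one_plus_one by (simp add: one_add_one[symmetric])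

lemma minus_self [simp]: "- (x::'a) = x"
  using add_self[of x] by (metis add.inverse_unique)

lemma eq_iff_sum_zero: "(x::'a) = y \<longleftrightarrow> x + y = 0"
  by (metis add.inverse_unique add_self minus_self)

lemma square_sum: "((x::'a) + y)^2 = x^2 + y^2"
  by (simp add: power2_sum)

lemma frobenius_add: "((x::'a) + y)^(2^i) = x^(2^i) + y^(2^i)"
proof (induction i)
  case (Suc i)
  have "(x+y)^(2^Suc i) = ((x+y)^(2^i))^2" by (simp add: power_mult[symmetric] mult.commute)
  also have "\<dots> = (x^(2^i))^2 + (y^(2^i))^2" using Suc by (simp add: square_sum)
  also have "\<dots> = x^(2^Suc i) + y^(2^Suc i)" by (simp add: power_mult[symmetric] mult.commute)
  finally show ?case .
qed simp

text \<open>Fermat's little theorem for the multiplicative group, proved by comparing the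
  product of all nonzero elements with the product of their multiples by \<open>x\<close>.\<close>
lemma power_order_eq_one: assumes "(x::'a) \<noteq> 0" shows "x^(2^e - 1) = 1"
proof -
  let ?A = "UNIV - {0::'a}"
  have image: "(\<lambda>y. x*y) ` ?A = ?A"
  proof
    show "(\<lambda>y. x*y) ` ?A \<subseteq> ?A" using assms by auto
    show "?A \<subseteq> (\<lambda>y. x*y) ` ?A"
    proof
      fix z assume "z \<in> ?A"
      hence "z = x * (z/x)" "z/x \<in> ?A" using assms by auto
      thus "z \<in> (\<lambda>y. x*y) ` ?A" by blast
    qed
  qed
  have inj: "inj_on (\<lambda>y. x*y) ?A" using assms by (auto simp: inj_on_def)
  have "prod (\<lambda>y. y) ?A = prod (\<lambda>y. y) ((\<lambda>y. x*y) ` ?A)" using image by simp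
  also have "\<dots> = x^(card ?A) * prod (\<lambda>y. y) ?A"
    by (simp add: prod.reindex[OF inj] prod.distrib)
  finally have "x^(card ?A) = 1"
    by (metis (no_types, lifting) mult_cancel_right2 prod_zero_iff finite DiffD2 singletonI)
  moreover have "card ?A = 2^e - 1" using card_field by (simp add: card_Diff_singleton)
  ultimately show ?thesis by simp
qed

lemma frobenius_period: "(x::'a)^(2^e) = x"
proof (cases "x = 0")
  case False
  have "(2::nat)^e = Suc (2^e - 1)" by simp
  hence "x^(2^e) = x * x^(2^e - 1)" by (metis power_Suc)
  thus ?thesis using power_order_eq_one[OF False] by simp
qed simp

lemma square_eq_imp_eq: "(y::'a)^2 = s^2 \<Longrightarrow> y = s"
  using eq_iff_sum_zero by (metis square_sum zero_power2 power_zero_numeral zero_eq_power2)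

lemma square_root_exists: "\<exists>s::'a. s^2 = x"
proof -
  have "inj (\<lambda>s::'a. s^2)" by (rule injI) (rule square_eq_imp_eq)
  hence "surj (\<lambda>s::'a. s^2)" by (rule finite_UNIV_inj_surj[OF finite_UNIV])
  thus ?thesis by (metis surjD)
qed

definition tr :: "'a \<Rightarrow> 'a" where "tr x = (\<Sum>i<e. x^(2^i))"

lemma tr_add: "tr (x + y) = tr x + tr y"
  unfolding tr_def by (simp add: frobenius_add sum.distrib)

lemma tr_square: "tr (x^2) = tr x"
proof -
  let ?f = "\<lambda>i. x^(2^i)"
  have "(x^2)^(2^i) = ?f (Suc i)" for i by (simp add: power_mult[symmetric] mult.commute)
  hence "tr (x^2) = (\<Sum>i<e. ?f (Suc i))" unfolding tr_def by simp
  moreover have "(\<Sum>i<Suc e. ?f i) = ?f 0 + (\<Sum>i<e. ?f (Suc i))" by (rule sum.lessThan_Suc_shift)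
  moreover have "(\<Sum>i<Suc e. ?f i) = (\<Sum>i<e. ?f i) + ?f e" by simp
  moreover have "?f e = x" "?f 0 = x" by (simp_all add: frobenius_period)
  ultimately show ?thesis unfolding tr_def by (simp add: add.commute)
qed

lemma square_of_sum: "(sum g A)^2 = sum (\<lambda>i. (g i)^2) A" for g :: "'b \<Rightarrow> 'a"
  by (induction A rule: infinite_finite_induct) (simp_all add: square_sum)

text \<open>The trace is fixed by squaring, so it lies in the prime field \<open>{0, 1}\<close>.\<close>
lemma tr_zero_or_one: "tr x = 0 \<or> tr x = 1"
proof -
  have "(tr x)^2 = (\<Sum>i<e. (x^(2^i))^2)" unfolding tr_def by (rule square_of_sum)
  also have "\<dots> = (\<Sum>i<e. (x^2)^(2^i))" by (simp add: power_mult[symmetric] mult.commute)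
  also have "\<dots> = tr x" using tr_square[of x] unfolding tr_def by simp
  finally have "tr x * (tr x - 1) = 0" by (simp add: power2_eq_square algebra_simps)
  thus ?thesis by simp
qed

text \<open>The trace is a polynomial of degree \<open>2^(e-1) < 2^e\<close>, so it is not identically 0.\<close>
lemma tr_onto_one: "\<exists>t. tr t = 1"
proof (rule ccontr)
  assume "\<not> (\<exists>t. tr t = 1)"
  hence all0: "tr t = 0" for t using tr_zero_or_one by blast
  let ?p = "\<Sum>i<e. monom (1::'a) (2^i)"
  have "coeff ?p (2^(e-1)) = (\<Sum>i<e. if i = e-1 then 1 else 0)"
    unfolding coeff_sum by (intro sum.cong) auto
  also have "\<dots> = 1" using e_pos by simp
  finally have p0: "?p \<noteq> 0" by auto
  have deg: "degree ?p \<le> 2^(e-1)"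
  proof (rule degree_le, intro allI impI)
    fix j :: nat assume j: "2^(e-1) < j"
    have "(2::nat)^i < j" if "i < e" for i
    proof -
      have "(2::nat)^i \<le> 2^(e-1)" using that by (intro power_increasing) auto
      thus ?thesis using j by (rule le_less_trans)
    qed
    thus "coeff ?p j = 0" unfolding coeff_sum by (intro sum.neutral) auto
  qed
  have "{x. poly ?p x = 0} = (UNIV::'a set)"
    using all0 unfolding tr_def by (simp add: poly_sum poly_monom)
  hence "2^e \<le> degree ?p" using card_poly_roots_bound[OF p0] card_field by simp
  moreover have "(2::nat)^(e-1) < 2^e" using e_pos by simp
  ultimately show False using deg by simp
qed

text \<open>The trace takes the value 0 on exactly half of the field, since adding an element
  of trace 1 swaps the two fibres.\<close>
lemma card_tr_kernel: "card (UNIV::'a set) = card {x. tr x = 0} * 2"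
proof -
  let ?Z = "{x::'a. tr x = 0}"
  obtain t where t: "tr t = 1" using tr_onto_one by blast
  have split: "(UNIV::'a set) = ?Z \<union> (\<lambda>y. y + t) ` ?Z"
  proof (intro set_eqI iffI)
    fix y :: 'a
    show "y \<in> ?Z \<union> (\<lambda>y. y + t) ` ?Z"
    proof (cases "tr y = 0")
      case False hence "tr y = 1" using tr_zero_or_one by blast
      hence "tr (y + t) = 0" using t by (simp add: tr_add one_plus_one)
      moreover have "y = (y + t) + t" by (simp add: add.assoc)
      ultimately show ?thesis by blast
    qed simp
  qed simp
  have "card (UNIV::'a set) = card ?Z + card ((\<lambda>y. y + t) ` ?Z)"
    by (subst split, rule card_Un_disjoint) (use t in \<open>auto simp: tr_add\<close>)
  also have "card ((\<lambda>y. y + t) ` ?Z) = card ?Z" by (rule card_image) (auto simp: inj_on_def)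
  finally show ?thesis by simp
qed

lemma card_artin_schreier_image: "card (UNIV::'a set) = card (range (\<lambda>z::'a. z^2 + z)) * 2"
proof (rule card_by_fibres)
  fix y assume "y \<in> range (\<lambda>z::'a. z^2 + z)"
  then obtain z where z: "y = z^2 + z" by auto
  have "{w \<in> UNIV. w^2 + w = y} = {z, z + 1}"
  proof (intro set_eqI iffI)
    fix w assume "w \<in> {w \<in> UNIV. w^2 + w = y}"
    hence "(w+z) * (w + z + 1) = 0"
      using z by (simp add: algebra_simps power2_eq_square) (metis add_self add.assoc add.left_commute)
    hence "w + z = 0 \<or> w + (z + 1) = 0" by (simp add: add.assoc)
    thus "w \<in> {z, z+1}" using eq_iff_sum_zero by blast
  next
    fix w assume "w \<in> {z, z+1}"
    thus "w \<in> {w \<in> UNIV. w^2 + w = y}" using z by (auto simp: square_sum)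
  qed
  thus "card {w \<in> UNIV. w^2 + w = y} = 2" by simp
qed simp

text \<open>The image of \<open>z \<mapsto> z^2 + z\<close> lies in the kernel of the trace and has the same size.\<close>
lemma artin_schreier: assumes "tr x = 0" shows "\<exists>z. z^2 + z = x"
proof -
  have "range (\<lambda>z::'a. z^2 + z) \<subseteq> {x. tr x = 0}" by (auto simp: tr_add tr_square)
  moreover have "card (range (\<lambda>z::'a. z^2 + z)) = card {x. tr x = 0}"
    using card_tr_kernel card_artin_schreier_image by simp
  ultimately have "range (\<lambda>z::'a. z^2 + z) = {x. tr x = 0}" by (intro card_subset_eq) auto
  thus ?thesis using assms by (metis (mono_tags, lifting) imageE mem_Collect_eq)
qed

text \<open>A quadratic \<open>b y^2 + B y + A\<close> with \<open>b, B \<noteq> 0\<close> has two distinct roots as soon as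
  \<open>tr (b A / B^2) = 0\<close>: substitute \<open>y = B z / b\<close> and apply Artin--Schreier.\<close>
lemma quadratic_two_roots:
  assumes "b \<noteq> 0" "B \<noteq> 0" "tr (b*A/B^2) = 0"
  shows "\<exists>y1 y2. y1 \<noteq> y2 \<and> b*y1^2 + B*y1 + (A::'a) = 0 \<and> b*y2^2 + B*y2 + A = 0"
proof -
  have root: "b*(B*z/b)^2 + B*(B*z/b) + A = 0" if "z^2 + z = b*A/B^2" for z
  proof -
    have "b*(B*z/b)^2 + B*(B*z/b) = B^2/b * (z^2+z)"
      using assms(1) by (simp add: field_simps power2_eq_square)
    also have "\<dots> = A" using assms that by (simp add: field_simps)
    finally show ?thesis by simp
  qed
  obtain z where z: "z^2 + z = b*A/B^2" using artin_schreier[OF assms(3)] by blast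
  have "(z+1)^2 + (z+1) = z^2 + z + (1 + 1)" by (simp add: square_sum algebra_simps)
  hence z1: "(z+1)^2 + (z+1) = b*A/B^2" using z one_plus_one by simp
  have "B*z/b \<noteq> B*(z+1)/b" using assms(1,2) by (simp add: divide_cancel_right)
  thus ?thesis using root[OF z] root[OF z1] by blast
qed

end

lemma qform_scale: "qform C (scale3 t v) = t^2 * qform C v"
  by (cases C, cases v) (simp add: qform_def scale3_def algebra_simps power2_eq_square)

lemma affine_point_on_conic:
  "(x, y, 1) \<in> conic (a,b,c,f,g,k) \<longleftrightarrow> b*y^2 + (f + k*x)*y + (a*x^2 + g*x + c) = 0"
  by (simp add: conic_def qform_def algebra_simps)

lemma mem_pline: "v \<in> pline (l1,l2,l3) \<longleftrightarrow> v \<noteq> (0,0,0) \<and> l1 * fst v + l2 * fst (snd v) + l3 * snd (snd v) = 0"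
  by (cases v) (simp add: pline_def)

text \<open>A line through a point \<open>P\<close> of the conic is tangent as soon as every point of the
  conic on it is (a multiple of) \<open>P\<close>; the converse inclusion holds by homogeneity.\<close>
lemma tangent_lineI:
  assumes "L \<noteq> (0,0,0)" "P \<in> pline L" "qform C P = 0"
    and "\<And>v. v \<in> pline L \<Longrightarrow> qform C v = 0 \<Longrightarrow> v \<in> proj_pt P"
  shows "tangent_line C L"
  unfolding tangent_line_def
proof (intro conjI exI)
  obtain l1 l2 l3 where L: "L = (l1,l2,l3)" by (cases L)
  show "P \<noteq> (0,0,0)" using assms(2) by (simp add: mem_pline L)
  show "pline L \<inter> conic C = proj_pt P"
  proof (intro set_eqI iffI)
    fix v assume "v \<in> pline L \<inter> conic C"
    thus "v \<in> proj_pt P" using assms(4) by (simp add: conic_def)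
  next
    fix v assume "v \<in> proj_pt P"
    then obtain t where t: "t \<noteq> 0" "v = scale3 t P" by (auto simp: proj_pt_def)
    obtain x y z where P: "P = (x,y,z)" by (cases P)
    have "l1*(t*x) + l2*(t*y) + l3*(t*z) = t*(l1*x + l2*y + l3*z)" by (simp add: algebra_simps)
    hence "v \<in> pline L" using t assms(2) by (auto simp: L P pline_def scale3_def)
    moreover have "qform C v = 0" using t assms(3) by (simp add: qform_scale)
    ultimately show "v \<in> pline L \<inter> conic C" by (simp add: conic_def pline_def L)
  qed
qed (use assms(1) in simp)

context gf2e
begin

lemma qgrad_char2: "qgrad (a,b,c,f,g,k::'a) (x,y,z) = (k*y + g*z, k*x + f*z, g*x + f*y)"
  by (simp add: qgrad_def)

text \<open>The point \<open>(f, g, k)\<close>, where the gradient of \<open>Q\<close> vanishes, is not on a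
  non-degenerate conic; in particular \<open>(f, g, k) \<noteq> 0\<close>, since for \<open>f = g = k = 0\<close> the form
  \<open>a x^2 + b y^2 + c z^2\<close> would be the square of a linear form.\<close>
lemma nucleus_coords_off_conic:
  assumes nd: "nondegenerate_conic (a,b,c,f,g,k::'a)"
  shows "qform (a,b,c,f,g,k) (f,g,k) \<noteq> 0"
proof -
  have grad: "qgrad (a,b,c,f,g,k) (f,g,k) = (0,0,0)"
    by (simp add: qgrad_char2 mult.commute)
  have "(f,g,k) \<noteq> (0,0,0)"
  proof
    assume z: "(f,g,k) = (0,0,0)"
    obtain sa sb where sa: "sa^2 = a" and sb: "sb^2 = b" using square_root_exists by metis
    define v where "v = (if a = 0 then (1,0,0) else (sb, sa, 0::'a))"
    have "v \<noteq> (0,0,0)" using sa unfolding v_def by auto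
    moreover have "qform (a,b,c,f,g,k) v = 0"
      using z sa sb unfolding v_def by (auto simp: qform_def mult.commute)
    moreover have "qgrad (a,b,c,f,g,k) v = (0,0,0)"
      using z unfolding v_def by (auto simp: qgrad_def)
    ultimately show False using nd unfolding nondegenerate_conic_def by blast
  qed
  thus ?thesis using nd grad unfolding nondegenerate_conic_def by blast
qed

text \<open>For \<open>b \<noteq> 0\<close> and \<open>f = k n\<close>, the line \<open>x = n z\<close> is a tangent: on it \<open>Q\<close> reduces to
  \<open>b y^2 + Q(n,0,1) z^2\<close>, a square of a linear form.\<close>
lemma tangent_x_const:
  assumes "b \<noteq> 0" "f = k*n"
  shows "tangent_line (a,b,c,f,g,k::'a) (1,0,n)"
proof -
  let ?C = "(a,b,c,f,g,k)"
  define A where "A = a*n^2 + g*n + c"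
  obtain y0 where y0: "y0^2 = A / b" using square_root_exists by blast
  have on_line: "qform ?C (n*z, y, z) = b*y^2 + A*z^2" for y z
    unfolding A_def using assms(2) by (simp add: qform_def algebra_simps power2_eq_square)
  show ?thesis
  proof (rule tangent_lineI)
    show "(n, y0, 1) \<in> pline (1, 0, n)" by (simp add: mem_pline)
    show "qform ?C (n, y0, 1) = 0" using on_line[of 1 y0] y0 assms(1) by simp
  next
    fix v assume v: "v \<in> pline (1,0,n)" "qform ?C v = 0"
    obtain x y z where xyz: "v = (x,y,z)" by (cases v)
    have x: "x = n*z" using v(1) eq_iff_sum_zero by (simp add: mem_pline xyz)
    have "b*y^2 = A*z^2" using v(2) on_line[of z y] eq_iff_sum_zero by (simp add: xyz x)
    also have "\<dots> = b*(y0*z)^2" using y0 assms(1) by (simp add: power_mult_distrib)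
    finally have y: "y = y0*z" using assms(1) square_eq_imp_eq by simp
    have "z \<noteq> 0" using v(1) x y by (auto simp: mem_pline xyz)
    moreover have "v = scale3 z (n,y0,1)" using xyz x y by (simp add: scale3_def mult.commute)
    ultimately show "v \<in> proj_pt (n,y0,1)" by (auto simp: proj_pt_def)
  qed simp
qed

text \<open>For \<open>g = k \<gamma>\<close>, the line \<open>y = \<gamma> z\<close> is a tangent: on it \<open>Q\<close> reduces to
  \<open>a x^2 + Q(0,\<gamma>,1) z^2\<close>, which does not vanish identically.\<close>
lemma tangent_y_const:
  assumes "g = k*\<gamma>" "a \<noteq> 0 \<or> qform (a,b,c,f,g,k) (0,\<gamma>,1) \<noteq> 0"
  shows "tangent_line (a,b,c,f,g,k::'a) (0,1,\<gamma>)"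
proof -
  let ?C = "(a,b,c,f,g,k)"
  define K where "K = qform ?C (0,\<gamma>,1)"
  have on_line: "qform ?C (x, \<gamma>*z, z) = a*x^2 + K*z^2" for x z
    unfolding K_def using assms(1) by (simp add: qform_def algebra_simps power2_eq_square)
  have in_line: "v \<in> pline (0,1,\<gamma>) \<longleftrightarrow> v \<noteq> (0,0,0) \<and> fst (snd v) = \<gamma> * snd (snd v)" for v
    using eq_iff_sum_zero by (auto simp: mem_pline)
  show ?thesis
  proof (cases "a = 0")
    case True
    hence K: "K \<noteq> 0" using assms(2) K_def by simp
    show ?thesis
    proof (rule tangent_lineI)
      fix v assume v: "v \<in> pline (0,1,\<gamma>)" "qform ?C v = 0"
      obtain x y z where xyz: "v = (x,y,z)" by (cases v)
      have y: "y = \<gamma>*z" "(x,y,z) \<noteq> (0,0,0)" using v(1) xyz in_line by auto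
      have "z = 0" using v(2) on_line[of x z] True K by (simp add: xyz y)
      hence "x \<noteq> 0" "v = scale3 x (1,0,0)" using y xyz by (auto simp: scale3_def)
      thus "v \<in> proj_pt (1,0,0)" by (auto simp: proj_pt_def)
    qed (use True in \<open>simp_all add: mem_pline qform_def\<close>)
  next
    case False
    obtain s where s: "s^2 = K/a" using square_root_exists by blast
    have s_on: "qform ?C (s, \<gamma>, 1) = 0" using on_line[of s 1] s False by simp
    show ?thesis
    proof (rule tangent_lineI)
      fix v assume v: "v \<in> pline (0,1,\<gamma>)" "qform ?C v = 0"
      obtain x y z where xyz: "v = (x,y,z)" by (cases v)
      have y: "y = \<gamma>*z" "(x,y,z) \<noteq> (0,0,0)" using v(1) xyz in_line by auto
      have "a*x^2 = K*z^2" using v(2) on_line[of x z] eq_iff_sum_zero by (simp add: xyz y)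
      also have "\<dots> = a*(s*z)^2" using s False by (simp add: power_mult_distrib)
      finally have x: "x = s*z" using False square_eq_imp_eq by simp
      have "z \<noteq> 0" using y x by auto
      moreover have "v = scale3 z (s,\<gamma>,1)" using xyz x y by (simp add: scale3_def mult.commute)
      ultimately show "v \<in> proj_pt (s,\<gamma>,1)" by (auto simp: proj_pt_def)
    qed (use s_on in \<open>simp_all add: mem_pline\<close>)
  qed
qed

text \<open>If \<open>b, k \<noteq> 0\<close> the nucleus is the affine point \<open>(f/k, g/k)\<close>: it is the common point
  of the two tangents \<open>x = (f/k) z\<close> and \<open>y = (g/k) z\<close>.\<close>
lemma nucleus_affine:
  assumes nd: "nondegenerate_conic (a,b,c,f,g,k::'a)" and nuc: "is_nucleus (a,b,c,f,g,k) N"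
    and b: "b \<noteq> 0" and k: "k \<noteq> 0"
  shows "(f/k, g/k, 1) \<in> proj_pt N"
proof -
  let ?C = "(a,b,c,f,g,k)"
  define n where "n = f/k"
  define \<gamma> where "\<gamma> = g/k"
  have fn: "f = k*n" and g\<gamma>: "g = k*\<gamma>" unfolding n_def \<gamma>_def using k by simp_all
  have "qform ?C (f,g,k) = k^2 * qform ?C (n, \<gamma>, 1)"
    using qform_scale[of ?C k "(n,\<gamma>,1)"] fn g\<gamma> by (simp add: scale3_def mult.commute)
  hence "qform ?C (n, \<gamma>, 1) \<noteq> 0" using nucleus_coords_off_conic[OF nd] by auto
  moreover have "qform ?C (n, \<gamma>, 1) = a*n^2 + qform ?C (0, \<gamma>, 1)"
    using fn g\<gamma> by (simp add: qform_def algebra_simps)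
  ultimately have "a \<noteq> 0 \<or> qform ?C (0, \<gamma>, 1) \<noteq> 0" by auto
  hence "N \<in> pline (1,0,n)" "N \<in> pline (0,1,\<gamma>)"
    using nuc tangent_x_const[OF b fn] tangent_y_const[OF g\<gamma>] unfolding is_nucleus_def by auto
  moreover obtain N1 N2 N3 where NN: "N = (N1,N2,N3)" by (cases N)
  ultimately have "N1 = n*N3" "N2 = \<gamma>*N3" "N3 \<noteq> 0"
    using eq_iff_sum_zero by (auto simp: mem_pline)
  hence "1/N3 \<noteq> 0 \<and> (n,\<gamma>,1) = scale3 (1/N3) N" by (simp add: NN scale3_def)
  thus ?thesis unfolding n_def \<gamma>_def proj_pt_def by blast
qed

lemma two_conic_points_over:
  assumes "b \<noteq> 0" "f + k*x \<noteq> 0" "tr (b*(a*x^2 + g*x + c)/(f + k*x)^2) = 0"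
  shows "\<exists>y1 y2. y1 \<noteq> y2 \<and> (x,y1,1) \<in> conic (a,b,c,f,g,k::'a) \<and> (x,y2,1) \<in> conic (a,b,c,f,g,k)"
  using quadratic_two_roots[OF assms] by (auto simp: affine_point_on_conic)

end

text \<open>The ring identity behind the Moebius step, with primed variables standing for the
  conjugates \<open>z^q\<close>: it compares the norm of \<open>\<beta> + n w\<close> with \<open>u\<close> times the norm of \<open>w\<close>.\<close>
lemma moebius_norm_identity:
  fixes \<beta> \<beta>' n n' u v v' D :: "'a::comm_ring_1"
  shows "(\<beta>*u + n*D*v) * (\<beta>'*u + n'*D*v') - u * ((\<beta>*n' + D*v) * (\<beta>'*n + D*v'))
    = (u - n*n') * (\<beta>*\<beta>'*u - D^2*(v*v'))"
  by (simp add: algebra_simps power2_eq_square)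

locale gf_q2 =
  fixes m :: nat and field_type :: "'a::{field,finite} itself"
  assumes card_field_q2: "card (UNIV::'a set) = (2^m)^2" and m_ge2: "2 \<le> m"

sublocale gf_q2 \<subseteq> gf2e "2*m" field_type
  by unfold_locales (use card_field_q2 m_ge2 in \<open>simp_all add: power_mult[symmetric] mult.commute\<close>)

context gf_q2
begin

abbreviation q :: nat where "q \<equiv> 2^m"

lemma q_ge4: "q \<ge> 4"
proof -
  have "(2::nat)^2 \<le> 2^m" using m_ge2 by (intro power_increasing) auto
  thus ?thesis by simp
qed

lemma of_nat_q_plus_one: "(of_nat (q + 1) :: 'a) = 1"
  using m_ge2 by simp

lemma frobenius_q_involution: "((x::'a)^q)^q = x"
  using frobenius_period[of x] by (simp add: power_mult[symmetric] power_add[symmetric] mult_2)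

definition Fq_star :: "'a set" where "Fq_star = {r. r^q = r \<and> r \<noteq> 0}"

definition norm_circle :: "'a \<Rightarrow> 'a set" where "norm_circle r = {v. v^(q+1) = r}"

lemma norm_in_subfield: "((x::'a)^(q+1))^q = x^(q+1)"
proof -
  have "(x^(q+1))^q = (x^q)^q * x^q" by (simp add: power_mult_distrib)
  also have "\<dots> = x^(q+1)" by (simp add: frobenius_q_involution mult.commute)
  finally show ?thesis .
qed

lemma norm_in_Fq_star: "(x::'a) \<noteq> 0 \<Longrightarrow> x^(q+1) \<in> Fq_star"
  unfolding Fq_star_def using norm_in_subfield by simp

lemma Fq_star_mult: "x \<in> Fq_star \<Longrightarrow> y \<in> Fq_star \<Longrightarrow> x*y \<in> Fq_star"
  unfolding Fq_star_def by (simp add: power_mult_distrib)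

lemma Fq_star_divide: "x \<in> Fq_star \<Longrightarrow> y \<in> Fq_star \<Longrightarrow> x/y \<in> Fq_star"
  unfolding Fq_star_def by (simp add: power_divide)

lemma card_Fq_star_le: "card Fq_star \<le> q - 1"
proof -
  have "Fq_star \<subseteq> {x. x^(q-1) = 1}"
  proof
    fix x assume "x \<in> Fq_star"
    hence x: "x^q = x" "x \<noteq> 0" unfolding Fq_star_def by auto
    have "q = Suc (q - 1)" using q_ge4 by simp
    hence "x^q = x * x^(q - 1)" by (metis power_Suc)
    thus "x \<in> {x. x^(q-1) = 1}" using x by simp
  qed
  hence "card Fq_star \<le> card {x::'a. x^(q-1) = 1}" by (intro card_mono) auto
  also have "\<dots> \<le> q - 1" by (rule card_roots_power_eq_le) (use q_ge4 in simp)
  finally show ?thesis .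
qed

lemma card_norm_fibre:
  assumes "(x0::'a) \<noteq> 0"
  shows "card {x \<in> UNIV - {0}. x^(q+1) = x0^(q+1)} = card (norm_circle 1)"
proof -
  have "{x \<in> UNIV - {0}. x^(q+1) = x0^(q+1)} = (\<lambda>w. w*x0) ` norm_circle 1"
  proof (intro set_eqI iffI)
    fix x assume "x \<in> {x \<in> UNIV - {0}. x^(q+1) = x0^(q+1)}"
    hence "(x/x0)^(q+1) = 1" "x = (x/x0)*x0" using assms by (auto simp: power_divide)
    thus "x \<in> (\<lambda>w. w*x0) ` norm_circle 1" unfolding norm_circle_def by blast
  next
    fix x assume "x \<in> (\<lambda>w. w*x0) ` norm_circle 1"
    then obtain w where w: "w^(q+1) = 1" "x = w*x0" unfolding norm_circle_def by auto
    hence "w \<noteq> 0" by (metis power_0_Suc add.commute plus_1_eq_Suc zero_neq_one)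
    thus "x \<in> {x \<in> UNIV - {0}. x^(q+1) = x0^(q+1)}" using w assms by (simp add: power_mult_distrib)
  qed
  also have "card \<dots> = card (norm_circle 1)"
    by (rule card_image) (use assms in \<open>auto simp: inj_on_def\<close>)
  finally show ?thesis .
qed

text \<open>Counting \<open>q^2 - 1 = (q-1)(q+1)\<close> nonzero elements by their norms, using the bounds
  \<open>|GF(q)\<^sup>*| \<le> q - 1\<close> and \<open>|norm_circle 1| \<le> q + 1\<close>: both bounds are attained, so the norm
  maps onto \<open>GF(q)\<^sup>*\<close> and the unit circle has \<open>q + 1\<close> elements.\<close>
lemma norm_counting:
  "card (norm_circle 1) = q + 1 \<and> (\<lambda>x. x^(q+1)) ` (UNIV - {0}) = Fq_star"
proof -
  let ?A = "UNIV - {0::'a}"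
  let ?N = "\<lambda>x::'a. x^(q+1)"
  have "card ?A = card (?N ` ?A) * card (norm_circle 1)"
  proof (rule card_by_fibres)
    fix y assume "y \<in> ?N ` ?A"
    then obtain x0 where "x0 \<noteq> 0" "y = ?N x0" by auto
    thus "card {x \<in> ?A. ?N x = y} = card (norm_circle 1)" using card_norm_fibre by simp
  qed simp
  moreover have "card ?A = (q - 1) * (q + 1)"
    using card_field_q2 q_ge4 by (simp add: card_Diff_singleton power2_eq_square algebra_simps)
  ultimately have eq: "card (?N ` ?A) * card (norm_circle 1) = (q - 1) * (q + 1)" by simp
  have sub: "?N ` ?A \<subseteq> Fq_star" using norm_in_Fq_star by auto
  have le1: "card (?N ` ?A) \<le> q - 1"
    using card_mono[OF finite sub] card_Fq_star_le by simp
  have le2: "card (norm_circle 1) \<le> q + 1"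
    unfolding norm_circle_def by (rule card_roots_power_eq_le) simp
  have c1: "card (?N ` ?A) = q - 1"
  proof (rule ccontr)
    assume "card (?N ` ?A) \<noteq> q - 1"
    hence "card (?N ` ?A) < q - 1" using le1 by simp
    hence "card (?N ` ?A) * card (norm_circle 1) < (q - 1) * (q + 1)"
      using le2 by (metis le_less_trans mult_le_mono2 mult_less_mono1 add_gr_0 zero_less_one)
    thus False using eq by simp
  qed
  hence "(q - 1) * card (norm_circle 1) = (q - 1) * (q + 1)" using eq by simp
  hence "card (norm_circle 1) = q + 1" using q_ge4 by (simp only: mult_cancel1) simp
  moreover have "?N ` ?A = Fq_star"
    by (rule card_subset_eq) (use sub c1 card_Fq_star_le card_mono[OF finite sub] in auto)
  ultimately show ?thesis by simp
qed

lemma norm_onto_Fq_star: assumes "r \<in> Fq_star" shows "\<exists>x. x \<noteq> 0 \<and> x^(q+1) = r"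
  using norm_counting assms by (metis (no_types, lifting) DiffE image_iff singletonI)

lemma card_norm_circle: assumes "r \<in> Fq_star" shows "card (norm_circle r) = q + 1"
proof -
  obtain x0 where x0: "x0 \<noteq> 0" "x0^(q+1) = r" using norm_onto_Fq_star[OF assms] by blast
  have "r \<noteq> 0" using assms unfolding Fq_star_def by simp
  hence "norm_circle r = {x \<in> UNIV - {0}. x^(q+1) = x0^(q+1)}"
    using x0 unfolding norm_circle_def by auto
  thus ?thesis using card_norm_fibre[OF x0(1)] norm_counting by simp
qed

text \<open>If \<open>q + 1\<close> does not divide \<open>k\<close>, some element of the unit circle has \<open>w^k \<noteq> 1\<close>:
  otherwise all \<open>q + 1\<close> elements of the unit circle would be roots of \<open>x^(k mod (q+1)) = 1\<close>.\<close>
lemma unit_circle_nontrivial_power: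
  assumes "\<not> (q+1) dvd k"
  shows "\<exists>w::'a. w^(q+1) = 1 \<and> w^k \<noteq> 1"
proof (rule ccontr)
  assume "\<not> ?thesis"
  hence all: "w^k = 1" if "w^(q+1) = 1" for w :: 'a using that by blast
  define b where "b = k mod (q+1)"
  have b: "0 < b" "b < q + 1" using assms unfolding b_def by (auto simp: dvd_eq_mod_eq_0)
  have "norm_circle 1 \<subseteq> {x. x^b = 1}"
  proof
    fix w assume "w \<in> norm_circle 1"
    hence w1: "w^(q+1) = 1" unfolding norm_circle_def by simp
    have "k = (q+1) * (k div (q+1)) + b" unfolding b_def by (rule mult_div_mod_eq[symmetric])
    hence "w^k = (w^(q+1))^(k div (q+1)) * w^b" by (metis power_add power_mult)
    thus "w \<in> {x. x^b = 1}" using all[OF w1] w1 by simp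
  qed
  hence "card (norm_circle 1) \<le> card {x::'a. x^b = 1}" by (intro card_mono) auto
  also have "\<dots> \<le> b" by (rule card_roots_power_eq_le) (use b in simp)
  finally show False using norm_counting b by simp
qed

text \<open>Power sums over a circle vanish unless the exponent is a multiple of \<open>q + 1\<close>:
  multiplying by a unit \<open>w\<close> with \<open>w^k \<noteq> 1\<close> permutes the circle.\<close>
lemma power_sum_norm_circle:
  assumes "\<not> (q+1) dvd k"
  shows "(\<Sum>v\<in>norm_circle r. v^k) = 0"
proof -
  obtain w :: 'a where w: "w^(q+1) = 1" "w^k \<noteq> 1"
    using unit_circle_nontrivial_power[OF assms] by blast
  have w0: "w \<noteq> 0" using w(1) by (metis power_0_Suc add.commute plus_1_eq_Suc zero_neq_one)
  have image: "(\<lambda>v. w*v) ` norm_circle r = norm_circle r"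
  proof (intro set_eqI iffI)
    fix x assume "x \<in> (\<lambda>v. w*v) ` norm_circle r"
    thus "x \<in> norm_circle r" using w(1) unfolding norm_circle_def by (auto simp: power_mult_distrib)
  next
    fix x assume "x \<in> norm_circle r"
    hence "x = w * (x/w)" "x/w \<in> norm_circle r"
      using w(1) w0 unfolding norm_circle_def by (auto simp: power_divide)
    thus "x \<in> (\<lambda>v. w*v) ` norm_circle r" by blast
  qed
  have inj: "inj_on (\<lambda>v. w*v) (norm_circle r)" using w0 by (auto simp: inj_on_def)
  let ?S = "\<Sum>v\<in>norm_circle r. v^k"
  have "?S = (\<Sum>v\<in>norm_circle r. (w*v)^k)"
    by (subst image[symmetric]) (simp add: sum.reindex[OF inj])
  also have "\<dots> = w^k * ?S" by (simp add: power_mult_distrib sum_distrib_left)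
  finally have "(w^k - 1) * ?S = 0" by (simp add: algebra_simps)
  thus ?thesis using w(2) by simp
qed

text \<open>If it were constant \<open>= \<tau> + 1\<close> there, the sum of \<open>tr v \<cdot> v^q\<close> over the circle
  would vanish by the power-sum lemma, whereas expanding the trace gives
  \<open>\<Sum> v^(q+1) = (q + 1) r = r \<noteq> 0\<close> (all other exponents \<open>2^i + q\<close> are not multiples of \<open>q + 1\<close>).\<close>
lemma trace_takes_value_on_circle:
  assumes "r \<in> Fq_star" "\<tau> = 0 \<or> \<tau> = 1"
  shows "\<exists>v. v^(q+1) = r \<and> tr v = \<tau>"
proof (rule ccontr)
  assume "\<not> ?thesis"
  hence "tr v = \<tau> + 1" if "v \<in> norm_circle r" for v
    using that tr_zero_or_one[of v] assms(2) unfolding norm_circle_def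
    by (auto simp: one_plus_one)
  hence "(\<Sum>v\<in>norm_circle r. tr v * v^q) = (\<tau> + 1) * (\<Sum>v\<in>norm_circle r. v^q)"
    by (simp add: sum_distrib_left)
  also have "(\<Sum>v\<in>norm_circle r. v^q) = 0"
    by (rule power_sum_norm_circle) (use q_ge4 in \<open>auto dest: dvd_imp_le\<close>)
  finally have sum0: "(\<Sum>v\<in>norm_circle r. tr v * v^q) = 0" by simp
  let ?f = "\<lambda>i. \<Sum>v\<in>norm_circle r. v^(2^i + q)"
  have "(\<Sum>v\<in>norm_circle r. tr v * v^q) = (\<Sum>i<2*m. ?f i)"
    unfolding tr_def by (simp add: sum_distrib_right power_add sum.swap[of _ _ "norm_circle r"])
  also have "\<dots> = ?f 0 + (\<Sum>i<2*m-1. ?f (Suc i))"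
    using sum.lessThan_Suc_shift[of ?f "2*m-1"] m_ge2 by (simp add: Suc_diff_Suc)
  also have "(\<Sum>i<2*m-1. ?f (Suc i)) = 0"
  proof (rule sum.neutral, rule ballI)
    fix i assume "i \<in> {..<2*m-1}"
    hence "\<not> (q+1) dvd (2^(Suc i) + q)" by (intro not_dvd_two_pow_plus) auto
    thus "?f (Suc i) = 0" by (intro power_sum_norm_circle) simp_all
  qed
  also have "?f 0 = (\<Sum>v\<in>norm_circle r. r)" unfolding norm_circle_def by (simp add: add.commute)
  also have "\<dots> = r" using card_norm_circle[OF assms(1)] of_nat_q_plus_one by simp
  finally show False using sum0 assms(1) unfolding Fq_star_def by simp
qed

definition norm_points :: "('a \<times> 'a \<times> 'a) set \<Rightarrow> 'a \<Rightarrow> ('a \<times> 'a) set" where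
  "norm_points \<Omega> u = {(x, y). (x, y, 1) \<in> \<Omega> \<and> x^(q+1) = u}"

lemma norm_points_mono: "\<Omega> \<subseteq> \<Omega>' \<Longrightarrow> norm_points \<Omega> u \<subseteq> norm_points \<Omega>' u"
  unfolding norm_points_def by auto

text \<open>Finiteness is automatic since the field is finite.\<close>
lemma two_le_card_norm_points:
  assumes "(x1,y1) \<noteq> (x2,y2)" "(x1,y1) \<in> norm_points \<Omega> u" "(x2,y2) \<in> norm_points \<Omega> u"
  shows "2 \<le> card (norm_points \<Omega> u)"
  using two_le_card[OF finite assms(2,3,1)] .

lemma two_le_card_norm_points_by_lifts:
  assumes "u \<in> Fq_star" and "\<And>x. x \<in> norm_circle u - {p} \<Longrightarrow> (x, Y x, 1) \<in> \<Omega>"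
  shows "2 \<le> card (norm_points \<Omega> u)"
proof -
  let ?lift = "\<lambda>x. (x, Y x)"
  have "?lift ` (norm_circle u - {p}) \<subseteq> norm_points \<Omega> u"
    using assms(2) unfolding norm_points_def norm_circle_def by auto
  moreover have "inj_on ?lift (norm_circle u - {p})" by (auto simp: inj_on_def)
  ultimately have "card (norm_circle u - {p}) \<le> card (norm_points \<Omega> u)"
    by (metis card_inj_on_le finite)
  moreover have "q \<le> card (norm_circle u - {p})"
    using card_norm_circle[OF assms(1)] by (simp add: card_Diff_singleton_if)
  ultimately show ?thesis using q_ge4 by simp
qed

lemma two_le_card_norm_points_over:
  assumes "x^(q+1) = u" "b \<noteq> 0" "f + k*x \<noteq> 0" "tr (b*(a*x^2 + g*x + c)/(f + k*x)^2) = 0"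
  shows "2 \<le> card (norm_points (conic (a,b,c,f,g,k)) u)"
proof -
  obtain y1 y2 where "y1 \<noteq> y2" "(x,y1,1) \<in> conic (a,b,c,f,g,k)" "(x,y2,1) \<in> conic (a,b,c,f,g,k)"
    using two_conic_points_over[OF assms(2-4)] by blast
  thus ?thesis using assms(1) by (intro two_le_card_norm_points[of x y1 x y2]) (auto simp: norm_points_def)
qed

text \<open>Moebius step: for \<open>\<beta> \<noteq> 0\<close> and \<open>\<parallel>n\<parallel> \<noteq> u\<close>, the map \<open>x \<mapsto> \<beta>/(x + n)\<close> sends the circle
  \<open>\<parallel>x\<parallel> = u\<close> onto the translate \<open>e + {v. \<parallel>v\<parallel> = r}\<close> of another circle, where
  \<open>D = \<parallel>n\<parallel> + u\<close>, \<open>e = \<beta> n^q / D\<close> and \<open>r = \<parallel>\<beta>\<parallel> u / D^2\<close>.  Here is the inverse direction.\<close>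
lemma moebius_circle:
  fixes \<beta> D n u v :: 'a
  assumes "\<beta> \<noteq> 0" and D: "D = n^(q+1) + u" "D \<noteq> 0" and u: "u^q = u"
    and v: "v^(q+1) = \<beta>^(q+1) * u / D^2"
  defines "w \<equiv> \<beta> * n^q / D + v"
  shows "w \<noteq> 0 \<and> (\<beta>/w + n)^(q+1) = u"
proof -
  let ?cj = "\<lambda>z::'a. z^q"
  have cj_add: "?cj (y + z) = ?cj y + ?cj z" for y z by (rule frobenius_add)
  have cj_D: "?cj D = D" using D(1) u norm_in_subfield[of n] by (simp add: frobenius_add)
  have D_n: "D + n * ?cj n = u" using D(1) by (simp add: add.assoc[symmetric])
  have Dw: "D * w = \<beta> * ?cj n + D * v" unfolding w_def using D(2) by (simp add: field_simps)
  have cj_w: "?cj w = ?cj \<beta> * n / D + ?cj v"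
    unfolding w_def cj_add by (simp add: power_mult_distrib power_divide frobenius_q_involution cj_D)
  have Dw': "D * ?cj w = ?cj \<beta> * n + D * ?cj v"
    unfolding cj_w using D(2) by (simp add: distrib_left)
  define X where "X = \<beta> + n*w"
  have DX: "D * X = \<beta>*u + n*D*v"
  proof -
    have "D * X = \<beta> * D + n * (D * w)" unfolding X_def by (simp add: algebra_simps)
    also have "\<dots> = \<beta> * (D + n * ?cj n) + n * D * v" unfolding Dw by (simp add: algebra_simps)
    finally show ?thesis unfolding D_n .
  qed
  have cj_X: "?cj X = ?cj \<beta> + ?cj n * ?cj w"
    unfolding X_def cj_add by (simp add: power_mult_distrib)
  have D_n': "D + ?cj n * n = u" using D_n by (simp add: mult.commute)
  have DX': "D * ?cj X = ?cj \<beta>*u + ?cj n*D*?cj v"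
  proof -
    have "D * ?cj X = ?cj \<beta> * D + ?cj n * (D * ?cj w)" unfolding cj_X by (simp add: algebra_simps)
    also have "\<dots> = ?cj \<beta> * (D + ?cj n * n) + ?cj n * D * ?cj v" unfolding Dw' by (simp add: algebra_simps)
    finally show ?thesis unfolding D_n' .
  qed
  have "D^2 * (v * ?cj v) = \<beta> * ?cj \<beta> * u"
    using v D(2) by (simp add: mult.commute)
  hence "(\<beta>*u + n*D*v) * (?cj \<beta>*u + ?cj n*D*?cj v)
      - u * ((\<beta>*?cj n + D*v) * (?cj \<beta>*n + D*?cj v)) = 0"
    unfolding moebius_norm_identity by simp
  hence "(D*X) * (D*?cj X) = u * ((D*w) * (D*?cj w))"
    unfolding DX DX' Dw Dw' by simp
  hence XX: "X * ?cj X = u * (w * ?cj w)" using D(2) by (simp add: algebra_simps)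
  have "w \<noteq> 0"
  proof
    assume "w = 0"
    hence "\<beta> * ?cj \<beta> = 0" using XX unfolding X_def by simp
    thus False using assms(1) by simp
  qed
  moreover have "\<beta>/w + n = X/w" unfolding X_def using \<open>w \<noteq> 0\<close> by (simp add: field_simps)
  ultimately show ?thesis using XX by (simp add: power_divide)
qed

lemma circle_point_with_moebius_trace:
  assumes u: "u \<in> Fq_star" and "\<beta> \<noteq> 0" "n^(q+1) \<noteq> u" "\<tau> = 0 \<or> \<tau> = 1"
  shows "\<exists>x. x^(q+1) = u \<and> x \<noteq> n \<and> tr (\<beta>/(x + n)) = \<tau>"
proof -
  define D where "D = n^(q+1) + u"
  have D0: "D \<noteq> 0" unfolding D_def using assms(3) eq_iff_sum_zero by simp
  have "D \<in> Fq_star"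
    using D0 u norm_in_subfield[of n] unfolding D_def Fq_star_def by (simp add: frobenius_add)
  hence "\<beta>^(q+1) * u / D^2 \<in> Fq_star" unfolding power2_eq_square
    by (intro Fq_star_divide Fq_star_mult norm_in_Fq_star assms(2) u)
  moreover have "\<tau> + tr (\<beta> * n^q / D) = 0 \<or> \<tau> + tr (\<beta> * n^q / D) = 1"
    using assms(4) tr_zero_or_one[of "\<beta> * n^q / D"] one_plus_one by auto
  ultimately obtain v where v: "v^(q+1) = \<beta>^(q+1) * u / D^2" "tr v = \<tau> + tr (\<beta> * n^q / D)"
    using trace_takes_value_on_circle by blast
  define w where "w = \<beta> * n^q / D + v"
  have "w \<noteq> 0" and x: "(\<beta>/w + n)^(q+1) = u"
    using moebius_circle[OF assms(2) D_def D0 _ v(1)] u unfolding w_def Fq_star_def by auto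
  have "\<beta>/w + n + n = \<beta>/w" by (simp add: add.assoc)
  hence "\<beta>/(\<beta>/w + n + n) = w" using assms(2) \<open>w \<noteq> 0\<close> by simp
  moreover have "tr w = \<tau>" unfolding w_def tr_add v(2) by (simp add: add.commute add.left_commute)
  moreover have "\<beta>/w + n \<noteq> n" using assms(2) \<open>w \<noteq> 0\<close> by simp
  ultimately show ?thesis using x by metis
qed

text \<open>Case \<open>b = 0\<close>: the conic equation is linear in \<open>y\<close>, with coefficient \<open>f + k x\<close>, which
  vanishes for at most one \<open>x\<close> (\<open>f = k = 0\<close> is excluded by non-degeneracy).\<close>
lemma norm_points_b_zero:
  assumes u: "u \<in> Fq_star" and nd: "nondegenerate_conic (a,0,c,f,g,k)"
  shows "2 \<le> card (norm_points (conic (a,0,c,f,g,k)) u)"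
proof (rule two_le_card_norm_points_by_lifts[OF u])
  have fk: "f \<noteq> 0 \<or> k \<noteq> 0"
    using nucleus_coords_off_conic[OF nd] by (auto simp: qform_def)
  fix x assume x: "x \<in> norm_circle u - {f/k}"
  have "f + k*x \<noteq> 0"
  proof
    assume "f + k*x = 0"
    hence "f = k*x" using eq_iff_sum_zero by simp
    thus False using x fk by (cases "k = 0") auto
  qed
  thus "(x, (a*x^2 + g*x + c)/(f + k*x), 1) \<in> conic (a,0,c,f,g,k)"
    by (simp add: affine_point_on_conic)
qed

text \<open>Case \<open>b \<noteq> 0\<close>, \<open>f = k = 0\<close>: the conic equation reads \<open>b y^2 = A(x)\<close> and every \<open>x\<close> lifts.\<close>
lemma norm_points_f_k_zero:
  assumes u: "u \<in> Fq_star" and b: "b \<noteq> 0"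
  shows "2 \<le> card (norm_points (conic (a,b,c,0,g,0)) u)"
proof (rule two_le_card_norm_points_by_lifts[OF u, where p = 0])
  fix x
  obtain y where "y^2 = (a*x^2 + g*x + c)/b" using square_root_exists by blast
  hence "(x, y, 1) \<in> conic (a,b,c,0,g,0)" using b by (simp add: affine_point_on_conic)
  thus "(x, SOME y. (x, y, 1) \<in> conic (a,b,c,0,g,0), 1) \<in> conic (a,b,c,0,g,0)"
    by (rule someI)
qed

text \<open>Case \<open>b, f \<noteq> 0\<close>, \<open>k = 0\<close>: with \<open>s^2 = a b\<close>, the discriminant is
  \<open>b A(x)/f^2 = (s x/f)^2 + (b g/f^2) x + b c/f^2\<close>, whose trace is \<open>tr (\<beta> x) + tr (b c/f^2)\<close>
  for \<open>\<beta> = s/f + b g/f^2 \<noteq> 0\<close>; on the circle \<open>\<parallel>\<beta> x\<parallel> = \<parallel>\<beta>\<parallel> u\<close> the trace of \<open>\<beta> x\<close> takes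
  either value.\<close>
lemma norm_points_k_zero:
  assumes u: "u \<in> Fq_star" and nd: "nondegenerate_conic (a,b,c,f,g,0)"
    and b: "b \<noteq> 0" and f: "f \<noteq> 0"
  shows "2 \<le> card (norm_points (conic (a,b,c,f,g,0)) u)"
proof -
  obtain s where s: "s^2 = a*b" using square_root_exists by blast
  define \<beta> where "\<beta> = s/f + b*g/f^2"
  define \<gamma> where "\<gamma> = b*c/f^2"
  have "\<beta> \<noteq> 0"
  proof
    assume "\<beta> = 0"
    hence "s = b*g/f" using f eq_iff_sum_zero by (simp add: \<beta>_def field_simps power2_eq_square)
    hence "a*b = (b*g/f)^2" using s by simp
    hence "a*f^2 = b*g^2" using f b by (simp add: field_simps power2_eq_square)
    hence "a*f^2 + b*g^2 = 0" using eq_iff_sum_zero by simp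
    thus False using nucleus_coords_off_conic[OF nd] by (simp add: qform_def)
  qed
  hence "\<beta>^(q+1) * u \<in> Fq_star" by (intro Fq_star_mult norm_in_Fq_star u)
  then obtain v where v: "v^(q+1) = \<beta>^(q+1) * u" "tr v = tr \<gamma>"
    using trace_takes_value_on_circle tr_zero_or_one by blast
  define x where "x = v/\<beta>"
  have "x^(q+1) = u" unfolding x_def using v(1) \<open>\<beta> \<noteq> 0\<close> by (simp add: power_divide)
  moreover have "tr (b*(a*x^2 + g*x + c)/(f + 0*x)^2) = 0"
  proof -
    define P R where "P = s*x/f" and "R = (b*g/f^2)*x"
    have "b*(a*x^2 + g*x + c)/(f + 0*x)^2 = P^2 + R + \<gamma>"
      unfolding P_def R_def \<gamma>_def using s f by (simp add: field_simps power2_eq_square)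
    hence "tr (b*(a*x^2 + g*x + c)/(f + 0*x)^2) = tr (P + R) + tr \<gamma>"
      by (simp add: tr_add tr_square)
    also have "P + R = \<beta>*x" unfolding P_def R_def \<beta>_def by (simp add: algebra_simps)
    also have "\<beta>*x = v" unfolding x_def using \<open>\<beta> \<noteq> 0\<close> by simp
    finally show ?thesis using v(2) by simp
  qed
  ultimately show ?thesis using b f by (intro two_le_card_norm_points_over) simp_all
qed

text \<open>Case \<open>b, k \<noteq> 0\<close>, \<open>\<parallel>f/k\<parallel> = u\<close>: the nucleus \<open>(f/k, g/k)\<close> and a conic point with the same
  \<open>x = f/k\<close> (the conic equation is \<open>b y^2 = A(f/k)\<close> there) are two distinct affine points.\<close>
lemma norm_points_nucleus:
  assumes nd: "nondegenerate_conic (a,b,c,f,g,k)" and nuc: "is_nucleus (a,b,c,f,g,k) N"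
    and b: "b \<noteq> 0" and k: "k \<noteq> 0" and n: "(f/k)^(q+1) = u"
  shows "2 \<le> card (norm_points (conic (a,b,c,f,g,k) \<union> proj_pt N) u)"
proof -
  let ?C = "(a,b,c,f,g,k)" and ?n = "f/k" and ?\<gamma> = "g/k"
  obtain y0 where y0: "y0^2 = (a*?n^2 + g*?n + c)/b" using square_root_exists by blast
  have on: "(?n, y0, 1) \<in> conic ?C" using y0 b k by (simp add: affine_point_on_conic)
  have "qform ?C (f,g,k) = k^2 * qform ?C (?n, ?\<gamma>, 1)"
    using qform_scale[of ?C k "(?n, ?\<gamma>, 1)"] k by (simp add: scale3_def)
  hence "(?n, ?\<gamma>, 1) \<notin> conic ?C" using nucleus_coords_off_conic[OF nd] by (simp add: conic_def)
  hence "y0 \<noteq> ?\<gamma>" using on by auto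
  moreover have "(?n, ?\<gamma>, 1) \<in> proj_pt N" by (rule nucleus_affine[OF nd nuc b k])
  ultimately show ?thesis using on n
    by (intro two_le_card_norm_points[of ?n y0 ?n ?\<gamma>]) (auto simp: norm_points_def)
qed

text \<open>Case \<open>b, k \<noteq> 0\<close>, \<open>\<parallel>n\<parallel> \<noteq> u\<close> for \<open>n = f/k\<close>: in terms of \<open>d = x + n\<close>, with \<open>s^2 = b A(n)\<close>,
  the discriminant is \<open>a b/k^2 + (b g/k^2)/d + (s/(k d))^2\<close>, of trace
  \<open>tr (a b/k^2) + tr (\<beta>/d)\<close> for \<open>\<beta> = b g/k^2 + s/k \<noteq> 0\<close>; the Moebius step chooses \<open>x\<close>.\<close>
lemma norm_points_moebius:
  assumes u: "u \<in> Fq_star" and nd: "nondegenerate_conic (a,b,c,f,g,k)"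
    and b: "b \<noteq> 0" and k: "k \<noteq> 0" and n: "(f/k)^(q+1) \<noteq> u"
  shows "2 \<le> card (norm_points (conic (a,b,c,f,g,k)) u)"
proof -
  let ?C = "(a,b,c,f,g,k)"
  define n where "n = f/k"
  define A where "A = a*n^2 + g*n + c"
  have fn: "f = k*n" unfolding n_def using k by simp
  have "qform ?C (f,g,k) = k^2 * qform ?C (n, g/k, 1)"
    using qform_scale[of ?C k "(n, g/k, 1)"] fn k by (simp add: scale3_def mult.commute)
  moreover have "qform ?C (n, g/k, 1) = A + b*(g/k)^2"
    unfolding A_def using fn k by (simp add: qform_def algebra_simps power2_eq_square)
  ultimately have A: "A + b*(g/k)^2 \<noteq> 0" using nucleus_coords_off_conic[OF nd] by auto
  obtain s where s: "s^2 = b*A" using square_root_exists by blast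
  define \<beta> where "\<beta> = b*g/k^2 + s/k"
  have "\<beta> \<noteq> 0"
  proof
    assume "\<beta> = 0"
    hence "s = b*g/k" using k eq_iff_sum_zero by (simp add: \<beta>_def field_simps power2_eq_square)
    hence "b*A = (b*g/k)^2" using s by simp
    hence "A = b*(g/k)^2" using b k by (simp add: field_simps power2_eq_square)
    thus False using A eq_iff_sum_zero by simp
  qed
  define \<alpha> where "\<alpha> = a*b/k^2"
  obtain x where x: "x^(q+1) = u" "x \<noteq> n" "tr (\<beta>/(x + n)) = tr \<alpha>"
    using circle_point_with_moebius_trace[OF u \<open>\<beta> \<noteq> 0\<close> n[folded n_def] tr_zero_or_one] by blast
  define d where "d = x + n"
  have d: "d \<noteq> 0" using x(2) eq_iff_sum_zero unfolding d_def by simp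
  have B: "f + k*x = k*d" unfolding d_def fn by (simp add: algebra_simps)
  define P R where "P = (b*g/k^2)/d" and "R = s/(k*d)"
  have "a*x^2 + g*x + c = a*d^2 + g*d + A"
    unfolding d_def A_def by (simp add: square_sum algebra_simps)
  hence "b*(a*x^2 + g*x + c)/(f + k*x)^2 = \<alpha> + P + R^2"
    unfolding B \<alpha>_def P_def R_def using s k d by (simp add: field_simps power2_eq_square)
  hence "tr (b*(a*x^2 + g*x + c)/(f + k*x)^2) = tr \<alpha> + tr (P + R)"
    by (simp add: tr_add tr_square)
  also have "P + R = \<beta>/d" unfolding P_def R_def \<beta>_def using k d by (simp add: field_simps)
  finally have "tr (b*(a*x^2 + g*x + c)/(f + k*x)^2) = tr \<alpha> + tr (\<beta>/d)" .
  hence "tr (b*(a*x^2 + g*x + c)/(f + k*x)^2) = 0" using x(3) unfolding d_def by simp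
  moreover have "f + k*x \<noteq> 0" using B k d by simp
  ultimately show ?thesis using x(1) b by (intro two_le_card_norm_points_over)
qed

lemma hyperoval_norm_points:
  assumes u: "u \<in> Fq_star" and nd: "nondegenerate_conic C" and nuc: "is_nucleus C N"
  shows "2 \<le> card (norm_points (conic C \<union> proj_pt N) u)"
proof -
  obtain a b c f g k where C: "C = (a,b,c,f,g,k)" by (cases C)
  have "2 \<le> card (norm_points (conic C) u) \<or> 2 \<le> card (norm_points (conic C \<union> proj_pt N) u)"
  proof (cases "b = 0"; cases "k = 0"; cases "f = 0"; cases "(f/k)^(q+1) = u")
  qed (use u nd nuc in \<open>auto simp: C intro: norm_points_b_zero norm_points_f_k_zero
        norm_points_k_zero norm_points_nucleus norm_points_moebius\<close>)
  moreover have "card (norm_points (conic C) u) \<le> card (norm_points (conic C \<union> proj_pt N) u)"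
    by (intro card_mono finite norm_points_mono) auto
  ultimately show ?thesis by linarith
qed

end

theorem lemma3p2:
  fixes h :: nat and U :: "'a::{field,finite} set" and \<Omega> :: "('a \<times> 'a \<times> 'a) set"
  assumes "h > 1"
    and "card (UNIV :: 'a set) = (2^h)^2"
    and "U \<noteq> {}"
    and "U \<subset> {x. x ^ (2^h) = x \<and> x \<noteq> 0}"
    and "regular_hyperoval \<Omega>"
  shows "card {(x, y). (x, y, 1) \<in> \<Omega> \<and> x ^ (2^h + 1) \<in> U} \<ge> 2"
proof -
  interpret gf_q2 h "TYPE('a)"
    by unfold_locales (use assms(1,2) in auto)
  obtain u where u: "u \<in> U" using assms(3) by blast
  hence "u \<in> Fq_star" using assms(4) unfolding Fq_star_def by auto
  moreover obtain C N where "nondegenerate_conic C" "is_nucleus C N" "\<Omega> = conic C \<union> proj_pt N"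
    using assms(5) unfolding regular_hyperoval_def by blast
  ultimately have "2 \<le> card (norm_points \<Omega> u)" using hyperoval_norm_points by blast
  also have "norm_points \<Omega> u \<subseteq> {(x, y). (x, y, 1) \<in> \<Omega> \<and> x ^ (2^h + 1) \<in> U}"
    using u unfolding norm_points_def by auto
  hence "card (norm_points \<Omega> u) \<le> card {(x, y). (x, y, 1) \<in> \<Omega> \<and> x ^ (2^h + 1) \<in> U}"
    by (intro card_mono finite)
  finally show ?thesis .
qed

end
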